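(* Let $\tilde{\mathcal M}$ be the absorbing MDP built from an intervention rule $\mathcal G$ with constant $\tilde R\le0$. For every policy $\pi$, $$|\tilde R|\,P_{\mathcal G}(\pi)\le V^\pi(d_0)-\tilde V^\pi(d_0)\le\Big(|\tilde R|+\frac1{1-\gamma}\Big)P_{\mathcal G}(\pi).$$
   Context: $\mathcal M=(\mathcal S,\mathcal A,P,r,\gamma)$ is a discounted MDP with discrete state and action spaces, reward $r(s,a)\in[0,1]$, discount $\gamma\in[0,1)$, initial distribution $d_0$. $\mathcal S$ contains two distinguished states $s_\triangleright,s_\circ$; $\mathcal S_{\mathrm{safe}}=\mathcal S\setminus\{s_\triangleright,s_\circ\}$. $V^\pi(d_0)=\mathbb E[\sum_{t\ge0}\gamma^tr(s_t,a_t)]$ for trajectories of the stationary policy $\pi$ in $\mathcal M$ with $s_0\sim d_0$ (law $\rho^\pi$). Intervention rule: a triple $\mathcal G=(\bar Q,\mu,\eta)$ with backup policy $\mu$, $\eta\in[0,1]$, $\bar Q:\mathcal S_{\mathrm{safe}}\times\mathcal A\to[0,1]$; intervention set $\mathcal I=\{(s,a)\in\mathcal S_{\mathrm{safe}}\times\mathcal A:\bar Q(s,a)-\mathbb E_{a'\sim\mu(\cdot|s)}\bar Q(s,a')>\eta\}$. Absorbing MDP: $\tilde{\mathcal M}=(\mathcal S\cup\{s_\dagger\},\mathcal A,\tilde P,\tilde r,\gamma)$ with new state $s_\dagger$: $\tilde r(s,a)=\tilde R$ if $(s,a)\in\mathcal I$, $\tilde r(s_\dagger,a)=0$, $\tilde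 r=r$ otherwise; $\tilde P(\cdot|s,a)$ is the point mass at $s_\dagger$ if $(s,a)\in\mathcal I$ or $s=s_\dagger$, and $\tilde P=P$ otherwise. Policies are extended to $s_\dagger$ arbitrarily; $\tilde V^\pi(d_0)$ is the value of $\pi$ in $\tilde{\mathcal M}$ from $d_0$. $P_{\mathcal G}(\pi)=(1-\gamma)\sum_{h\ge0}\gamma^h\Pr_{\rho^\pi}(\exists t\le h:(s_t,a_t)\in\mathcal I)$. *)

theory Defs
  imports "HOL-Probability.Probability"
begin

text \<open>Law of the trajectory prefix (s_0,a_0),...,(s_h,a_h) of a stationary policy pi
  in an MDP with transition kernel P, started from d0. The last list element is time h.\<close>
fun traj :: "'s pmf \<Rightarrow> ('s \<Rightarrow> 'a pmf) \<Rightarrow> ('s \<Rightarrow> 'a \<Rightarrow> 's pmf) \<Rightarrow> nat \<Rightarrow> ('s \<times> 'a) list pmf" where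
  "traj d0 \<pi> P 0 = bind_pmf d0 (\<lambda>s. map_pmf (\<lambda>a. [(s, a)]) (\<pi> s))"
| "traj d0 \<pi> P (Suc h) = bind_pmf (traj d0 \<pi> P h) (\<lambda>xs.
      bind_pmf (P (fst (last xs)) (snd (last xs))) (\<lambda>s'. map_pmf (\<lambda>a. xs @ [(s', a)]) (\<pi> s')))"

definition value_fn :: "'s pmf \<Rightarrow> ('s \<Rightarrow> 'a pmf) \<Rightarrow> ('s \<Rightarrow> 'a \<Rightarrow> 's pmf) \<Rightarrow> ('s \<Rightarrow> 'a \<Rightarrow> real) \<Rightarrow> real \<Rightarrow> real" where
  "value_fn d0 \<pi> P r \<gamma> = (\<Sum>t. \<gamma> ^ t *
      measure_pmf.expectation (traj d0 \<pi> P t) (\<lambda>xs. r (fst (last xs)) (snd (last xs))))"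

text \<open>Intervention set of the rule (Qbar, mu, eta); S_safe excludes s_tri and s_circ.\<close>
definition interv_set :: "'s \<Rightarrow> 's \<Rightarrow> ('s \<Rightarrow> 'a \<Rightarrow> real) \<Rightarrow> ('s \<Rightarrow> 'a pmf) \<Rightarrow> real \<Rightarrow> ('s \<times> 'a) set" where
  "interv_set s_tri s_circ Qb \<mu> \<eta> = {(s, a). s \<noteq> s_tri \<and> s \<noteq> s_circ \<and>
      Qb s a - measure_pmf.expectation (\<mu> s) (\<lambda>a'. Qb s a') > \<eta>}"

text \<open>Absorbing MDP on 's option, where None is the new absorbing state s_dagger.\<close>
definition abs_P :: "('s \<times> 'a) set \<Rightarrow> ('s \<Rightarrow> 'a \<Rightarrow> 's pmf) \<Rightarrow> 's option \<Rightarrow> 'a \<Rightarrow> 's option pmf" where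
  "abs_P I P so a = (case so of None \<Rightarrow> return_pmf None
     | Some s \<Rightarrow> (if (s, a) \<in> I then return_pmf None else map_pmf Some (P s a)))"

definition abs_r :: "('s \<times> 'a) set \<Rightarrow> real \<Rightarrow> ('s \<Rightarrow> 'a \<Rightarrow> real) \<Rightarrow> 's option \<Rightarrow> 'a \<Rightarrow> real" where
  "abs_r I Rt r so a = (case so of None \<Rightarrow> 0
     | Some s \<Rightarrow> (if (s, a) \<in> I then Rt else r s a))"

definition interv_prob :: "'s pmf \<Rightarrow> ('s \<Rightarrow> 'a pmf) \<Rightarrow> ('s \<Rightarrow> 'a \<Rightarrow> 's pmf) \<Rightarrow> real \<Rightarrow> ('s \<times> 'a) set \<Rightarrow> real" where
  "interv_prob d0 \<pi> P \<gamma> I = (1 - \<gamma>) * (\<Sum>h. \<gamma> ^ h *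
      measure_pmf.prob (traj d0 \<pi> P h) {xs. \<exists>x\<in>set xs. x \<in> I})"

end

theory Submission
  imports Defs
begin

text \<open>Up to and including the first intervention, a trajectory of the absorbing MDP has the same
  law as one of the original MDP; afterwards the absorbing MDP earns \<open>Rt\<close> once and then nothing.
  Formally, both trajectory laws project onto the same Markov chain of pairs
  (trajectory stopped at its first intervention, current time).
  So at time \<open>h\<close> the reward gap is \<open>0\<close> before the first intervention, \<open>r - Rt \<in> [\<bar>Rt\<bar>, 1 + \<bar>Rt\<bar>]\<close>
  at it, and \<open>r \<in> [0, 1]\<close> after it. With \<open>p h\<close> the probability of an intervention by time \<open>h\<close>,
  the expected gap lies between \<open>\<bar>Rt\<bar> (p h - p (h - 1))\<close> and \<open>\<bar>Rt\<bar> (p h - p (h - 1)) + p h\<close>,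
  and discounted summation of the increments gives
  \<open>\<Sum>h. \<gamma>^h (p h - p (h - 1)) = (1 - \<gamma>) (\<Sum>h. \<gamma>^h p h) = interv_prob\<close>.\<close>

lemma length_takeWhile_less: "\<exists>y\<in>set xs. \<not> P y \<Longrightarrow> length (takeWhile P xs) < length xs"
  by (induction xs) auto

lemma abs_expectation_le:
  fixes f :: "'a \<Rightarrow> real"
  assumes "\<And>x. \<bar>f x\<bar> \<le> B"
  shows "\<bar>measure_pmf.expectation p f\<bar> \<le> B"
proof -
  have "integrable (measure_pmf p) (\<lambda>x. \<bar>f x\<bar>)"
    using assms by (intro measure_pmf.integrable_const_bound[where B = B]) auto
  then have "measure_pmf.expectation p (\<lambda>x. \<bar>f x\<bar>) \<le> B"
    using assms by (intro measure_pmf.integral_le_const) auto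
  then show ?thesis using integral_abs_bound[of "measure_pmf p" f] by linarith
qed

lemma summable_discounted_bounded:
  fixes x :: "nat \<Rightarrow> real"
  assumes "0 \<le> \<gamma>" "\<gamma> < 1" "\<And>h. \<bar>x h\<bar> \<le> B"
  shows "summable (\<lambda>h. \<gamma> ^ h * x h)"
proof (rule summable_comparison_test[where g = "\<lambda>h. B * \<gamma> ^ h"])
  show "\<exists>N. \<forall>n\<ge>N. norm (\<gamma> ^ n * x n) \<le> B * \<gamma> ^ n"
    using assms by (auto simp: abs_mult mult.commute[of "\<gamma> ^ _"] intro!: mult_right_mono)
  show "summable (\<lambda>h. B * \<gamma> ^ h)"
    using assms by (intro summable_mult summable_geometric) auto
qed

lemma suminf_discounted_increments:
  fixes a :: "nat \<Rightarrow> real"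
  assumes "0 \<le> \<gamma>" "\<gamma> < 1" "\<And>h. \<bar>a h\<bar> \<le> B"
  shows "(\<Sum>h. \<gamma> ^ h * (a h - (case h of 0 \<Rightarrow> 0 | Suc k \<Rightarrow> a k))) = (1 - \<gamma>) * (\<Sum>h. \<gamma> ^ h * a h)"
proof -
  define S where "S = (\<Sum>h. \<gamma> ^ h * a h)"
  have S: "(\<lambda>h. \<gamma> ^ h * a h) sums S"
    unfolding S_def using summable_discounted_bounded[OF assms] by (rule summable_sums)
  have "(\<lambda>h. \<gamma> ^ Suc h * a h) sums (\<gamma> * S)"
    using sums_mult[OF S, of \<gamma>] by (simp add: mult.assoc)
  then have "(\<lambda>h. \<gamma> ^ h * (case h of 0 \<Rightarrow> 0 | Suc k \<Rightarrow> a k)) sums (\<gamma> * S)"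
    using sums_Suc_iff[of "\<lambda>h. \<gamma> ^ h * (case h of 0 \<Rightarrow> 0 | Suc k \<Rightarrow> a k)" "\<gamma> * S"] by simp
  from sums_diff[OF S this] have "(\<lambda>h. \<gamma> ^ h * (a h - (case h of 0 \<Rightarrow> 0 | Suc k \<Rightarrow> a k))) sums (S - \<gamma> * S)"
    by (simp add: right_diff_distrib)
  then show ?thesis unfolding S_def by (simp add: sums_unique[symmetric] left_diff_distrib)
qed

definition hits :: "('s \<times> 'a) set \<Rightarrow> ('s \<times> 'a) list set" where
  "hits I = {xs. \<exists>x\<in>set xs. x \<in> I}"

fun stop_at :: "('s \<times> 'a) set \<Rightarrow> ('s \<times> 'a) list \<Rightarrow> ('s \<times> 'a) list" where
  "stop_at I [] = []"
| "stop_at I (x # xs) = (if x \<in> I then [x] else x # stop_at I xs)"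

lemma stop_at_no_hit: "xs \<notin> hits I \<Longrightarrow> stop_at I xs = xs"
  by (induction xs) (auto simp: hits_def)

lemma stop_at_append_hit: "xs \<in> hits I \<Longrightarrow> stop_at I (xs @ ys) = stop_at I xs"
  by (induction xs) (auto simp: hits_def)

lemma stop_at_append_no_hit: "xs \<notin> hits I \<Longrightarrow> stop_at I (xs @ ys) = xs @ stop_at I ys"
  by (induction xs) (auto simp: hits_def)

lemma length_stop_at_le: "length (stop_at I xs) \<le> length xs"
  by (induction xs) auto

lemma last_stop_at_hit: "xs \<in> hits I \<Longrightarrow> stop_at I xs \<noteq> [] \<and> last (stop_at I xs) \<in> I"
  by (induction xs) (auto simp: hits_def)

text \<open>Transition kernel of the stopped chain. A state \<open>(xs, n)\<close> is frozen (only the clock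
  advances) once \<open>xs\<close> ends in \<open>I\<close> or has fallen behind the clock.\<close>

definition stopped_step ::
  "('s \<times> 'a) set \<Rightarrow> ('s \<Rightarrow> 'a \<Rightarrow> 's pmf) \<Rightarrow> ('s \<Rightarrow> 'a pmf) \<Rightarrow>
   ('s \<times> 'a) list \<times> nat \<Rightarrow> (('s \<times> 'a) list \<times> nat) pmf" where
  "stopped_step I P \<pi> = (\<lambda>(xs, n).
     if length xs < n \<or> last xs \<in> I then return_pmf (xs, Suc n)
     else bind_pmf (P (fst (last xs)) (snd (last xs)))
       (\<lambda>s'. map_pmf (\<lambda>a. (xs @ [(s', a)], Suc n)) (\<pi> s')))"

lemma traj_nonempty: "xs \<in> set_pmf (traj d0 \<pi> P h) \<Longrightarrow> xs \<noteq> []"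
  by (induction h arbitrary: xs) auto

lemma map_pmf_butlast_traj_Suc: "map_pmf butlast (traj d0 \<pi> P (Suc h)) = traj d0 \<pi> P h"
  by (simp add: map_bind_pmf map_pmf_comp bind_return_pmf')

lemma traj_Suc_stop_at:
  "map_pmf (\<lambda>xs. (stop_at I xs, length xs)) (traj d0 \<pi> P (Suc h))
   = bind_pmf (map_pmf (\<lambda>xs. (stop_at I xs, length xs)) (traj d0 \<pi> P h)) (stopped_step I P \<pi>)"
proof -
  have "map_pmf (\<lambda>xs. (stop_at I xs, length xs)) (traj d0 \<pi> P (Suc h)) =
     bind_pmf (traj d0 \<pi> P h) (\<lambda>xs. bind_pmf (P (fst (last xs)) (snd (last xs)))
        (\<lambda>s'. map_pmf (\<lambda>a. (stop_at I (xs @ [(s', a)]), Suc (length xs))) (\<pi> s')))"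
    by (simp add: map_bind_pmf map_pmf_comp)
  also have "\<dots> = bind_pmf (traj d0 \<pi> P h) (\<lambda>xs. stopped_step I P \<pi> (stop_at I xs, length xs))"
  proof (rule bind_pmf_cong[OF refl])
    fix xs assume "xs \<in> set_pmf (traj d0 \<pi> P h)"
    then have ne: "xs \<noteq> []" by (rule traj_nonempty)
    show "bind_pmf (P (fst (last xs)) (snd (last xs)))
        (\<lambda>s'. map_pmf (\<lambda>a. (stop_at I (xs @ [(s', a)]), Suc (length xs))) (\<pi> s'))
      = stopped_step I P \<pi> (stop_at I xs, length xs)"
    proof (cases "xs \<in> hits I")
      case True
      then show ?thesis
        using last_stop_at_hit[OF True] by (simp add: stop_at_append_hit stopped_step_def)
    next
      case False
      then have "stop_at I xs = xs" and "last xs \<notin> I"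
        using ne by (auto simp: stop_at_no_hit hits_def)
      then show ?thesis
        using False by (simp add: stopped_step_def stop_at_append_no_hit if_distrib cong: if_cong)
    qed
  qed
  finally show ?thesis by (simp add: bind_map_pmf)
qed

definition unabsorbed :: "'s option \<times> 'a \<Rightarrow> bool" where
  "unabsorbed y \<longleftrightarrow> fst y \<noteq> None"

definition unabsorb :: "('s option \<times> 'a) list \<Rightarrow> ('s \<times> 'a) list \<times> nat" where
  "unabsorb ys = (map (\<lambda>(so, a). (the so, a)) (takeWhile unabsorbed ys), length ys)"

lemma absorbing_traj_persistent_absorption:
  assumes "ys \<in> set_pmf (traj (map_pmf Some d0) \<pi>t (abs_P I P) h)"
  shows "ys \<noteq> [] \<and> (fst (last ys) \<noteq> None \<longrightarrow> (\<forall>y\<in>set ys. fst y \<noteq> None))"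
  using assms
proof (induction h arbitrary: ys)
  case 0
  then show ?case by auto
next
  case (Suc h)
  then obtain xs s' a where xs: "xs \<in> set_pmf (traj (map_pmf Some d0) \<pi>t (abs_P I P) h)"
    and s': "s' \<in> set_pmf (abs_P I P (fst (last xs)) (snd (last xs)))"
    and ys: "ys = xs @ [(s', a)]"
    by auto
  have "s' \<noteq> None \<Longrightarrow> fst (last xs) \<noteq> None"
    using s' by (auto simp: abs_P_def split: option.splits)
  then show ?case using Suc.IH[OF xs] ys by auto
qed

lemma absorbing_traj_Suc_unabsorb:
  assumes ext: "\<And>s. \<pi>t (Some s) = \<pi> s"
  shows "map_pmf unabsorb (traj (map_pmf Some d0) \<pi>t (abs_P I P) (Suc h))
   = bind_pmf (map_pmf unabsorb (traj (map_pmf Some d0) \<pi>t (abs_P I P) h)) (stopped_step I P \<pi>)"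
proof -
  let ?T = "traj (map_pmf Some d0) \<pi>t (abs_P I P) h"
  have "map_pmf unabsorb (traj (map_pmf Some d0) \<pi>t (abs_P I P) (Suc h)) =
     bind_pmf ?T (\<lambda>ys. bind_pmf (abs_P I P (fst (last ys)) (snd (last ys)))
        (\<lambda>s'. map_pmf (\<lambda>a. unabsorb (ys @ [(s', a)])) (\<pi>t s')))"
    by (simp add: map_bind_pmf map_pmf_comp)
  also have "\<dots> = bind_pmf ?T (\<lambda>ys. stopped_step I P \<pi> (unabsorb ys))"
  proof (rule bind_pmf_cong[OF refl])
    fix ys assume "ys \<in> set_pmf ?T"
    then have ne: "ys \<noteq> []" using absorbing_traj_persistent_absorption by blast
    show "bind_pmf (abs_P I P (fst (last ys)) (snd (last ys)))
        (\<lambda>s'. map_pmf (\<lambda>a. unabsorb (ys @ [(s', a)])) (\<pi>t s')) = stopped_step I P \<pi> (unabsorb ys)"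
    proof (cases "\<forall>y\<in>set ys. unabsorbed y")
      case False
      then have tw: "\<And>zs. takeWhile unabsorbed (ys @ zs) = takeWhile unabsorbed ys"
        by (meson takeWhile_append1)
      have "length (takeWhile unabsorbed ys) < length ys"
        using False by (auto simp: length_takeWhile_less)
      then show ?thesis unfolding unabsorb_def tw by (simp add: stopped_step_def)
    next
      case live: True
      then have tw: "takeWhile unabsorbed ys = ys" by (simp add: takeWhile_eq_all_conv)
      obtain s a where la: "last ys = (Some s, a)"
        using live ne by (metis unabsorbed_def fst_conv last_in_set option.exhaust prod.collapse)
      have lp: "last (map (\<lambda>(so, a). (the so, a)) ys) = (s, a)"
        using la ne by (simp add: last_map)
      show ?thesis
      proof (cases "(s, a) \<in> I")
        case True
        have "takeWhile unabsorbed (ys @ [(None, a')]) = ys" for a'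
          using live by (simp add: takeWhile_append2 unabsorbed_def)
        then show ?thesis using True la lp ne
          unfolding unabsorb_def tw by (simp add: abs_P_def stopped_step_def bind_return_pmf)
      next
        case False
        have "takeWhile unabsorbed (ys @ [(Some s', a')]) = ys @ [(Some s', a')]" for s' a'
          using live by (simp add: takeWhile_eq_all_conv unabsorbed_def)
        then show ?thesis using False la lp ne
          unfolding unabsorb_def tw by (simp add: abs_P_def stopped_step_def bind_map_pmf ext)
      qed
    qed
  qed
  finally show ?thesis by (simp add: bind_map_pmf)
qed

lemma absorbing_traj_unabsorb_eq_stop_at:
  assumes ext: "\<And>s. \<pi>t (Some s) = \<pi> s"
  shows "map_pmf unabsorb (traj (map_pmf Some d0) \<pi>t (abs_P I P) h)
       = map_pmf (\<lambda>xs. (stop_at I xs, length xs)) (traj d0 \<pi> P h)"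
proof (induction h)
  case 0
  show ?case
    by (simp add: map_bind_pmf map_pmf_comp bind_map_pmf unabsorb_def unabsorbed_def ext if_distrib
        cong: if_cong)
next
  case (Suc h)
  then show ?case
    by (simp only: absorbing_traj_Suc_unabsorb[of \<pi>t \<pi>, OF ext] traj_Suc_stop_at)
qed

text \<open>The absorbing reward read off the stopped chain: it is \<open>0\<close> once the stopped trajectory has
  fallen behind the clock, i.e. strictly after the first intervention.\<close>

definition stopped_reward ::
  "('s \<times> 'a) set \<Rightarrow> real \<Rightarrow> ('s \<Rightarrow> 'a \<Rightarrow> real) \<Rightarrow> ('s \<times> 'a) list \<times> nat \<Rightarrow> real" where
  "stopped_reward I Rt r = (\<lambda>(xs, n).
     if length xs = n then (if last xs \<in> I then Rt else r (fst (last xs)) (snd (last xs))) else 0)"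

lemma abs_stopped_reward_le:
  assumes "\<And>s a. 0 \<le> r s a \<and> r s a \<le> 1"
  shows "\<bar>stopped_reward I Rt r xn\<bar> \<le> 1 + \<bar>Rt\<bar>"
  using assms[of "fst (last (fst xn))" "snd (last (fst xn))"] by (auto simp: stopped_reward_def split: prod.splits)

lemma abs_r_eq_stopped_reward:
  assumes "ys \<in> set_pmf (traj (map_pmf Some d0) \<pi>t (abs_P I P) h)"
  shows "abs_r I Rt r (fst (last ys)) (snd (last ys)) = stopped_reward I Rt r (unabsorb ys)"
proof -
  have ne: "ys \<noteq> []" and live: "fst (last ys) \<noteq> None \<longrightarrow> (\<forall>y\<in>set ys. fst y \<noteq> None)"
    using absorbing_traj_persistent_absorption[OF assms] by auto
  show ?thesis
  proof (cases "fst (last ys)")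
    case None
    then have "length (takeWhile unabsorbed ys) < length ys"
      using ne by (intro length_takeWhile_less) (auto simp: unabsorbed_def)
    then show ?thesis using None by (simp add: abs_r_def stopped_reward_def unabsorb_def)
  next
    case (Some s)
    then have tw: "takeWhile unabsorbed ys = ys" using live by (simp add: unabsorbed_def)
    have "last (map (\<lambda>(so, a). (the so, a)) ys) = (s, snd (last ys))"
      using ne Some by (cases "last ys") (simp add: last_map)
    then show ?thesis using Some unfolding unabsorb_def tw by (simp add: abs_r_def stopped_reward_def)
  qed
qed

lemma stopped_reward_stop_at:
  assumes "xs \<noteq> []"
  shows "stopped_reward I Rt r (stop_at I xs, length xs) =
    (if butlast xs \<in> hits I then 0
     else if last xs \<in> I then Rt else r (fst (last xs)) (snd (last xs)))"
proof -
  have xs: "xs = butlast xs @ [last xs]" using assms by simp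
  show ?thesis
  proof (cases "butlast xs \<in> hits I")
    case True
    then have "stop_at I xs = stop_at I (butlast xs)"
      by (subst xs) (simp add: stop_at_append_hit)
    moreover have "length (stop_at I (butlast xs)) < length xs"
      using length_stop_at_le[of I "butlast xs"] assms by (cases xs rule: rev_cases) auto
    ultimately show ?thesis using True by (simp add: stopped_reward_def)
  next
    case False
    then have "stop_at I xs = xs"
      by (subst (1 2) xs) (simp add: stop_at_append_no_hit)
    then show ?thesis using False by (simp add: stopped_reward_def)
  qed
qed

lemma expectation_abs_r_eq_stopped_reward:
  assumes ext: "\<And>s. \<pi>t (Some s) = \<pi> s"
  shows "measure_pmf.expectation (traj (map_pmf Some d0) \<pi>t (abs_P I P) h)
      (\<lambda>ys. abs_r I Rt r (fst (last ys)) (snd (last ys)))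
   = measure_pmf.expectation (traj d0 \<pi> P h) (\<lambda>xs. stopped_reward I Rt r (stop_at I xs, length xs))"
proof -
  let ?T = "traj (map_pmf Some d0) \<pi>t (abs_P I P) h"
  have "measure_pmf.expectation ?T (\<lambda>ys. abs_r I Rt r (fst (last ys)) (snd (last ys)))
     = measure_pmf.expectation ?T (\<lambda>ys. stopped_reward I Rt r (unabsorb ys))"
    by (intro integral_cong_AE) (auto simp: AE_measure_pmf_iff abs_r_eq_stopped_reward)
  also have "\<dots> = measure_pmf.expectation (map_pmf unabsorb ?T) (stopped_reward I Rt r)"
    by simp
  also have "\<dots> = measure_pmf.expectation (traj d0 \<pi> P h)
      (\<lambda>xs. stopped_reward I Rt r (stop_at I xs, length xs))"
    by (simp add: absorbing_traj_unabsorb_eq_stop_at[of \<pi>t \<pi>, OF ext])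
  finally show ?thesis .
qed

lemma prob_butlast_hits_traj:
  "measure_pmf.prob (traj d0 \<pi> P h) (butlast -` hits I) =
     (case h of 0 \<Rightarrow> 0 | Suc k \<Rightarrow> measure_pmf.prob (traj d0 \<pi> P k) (hits I))"
proof (cases h)
  case 0
  then show ?thesis by (auto simp: measure_pmf_zero_iff hits_def)
next
  case (Suc k)
  have "measure_pmf.prob (traj d0 \<pi> P (Suc k)) (butlast -` hits I)
      = measure_pmf.prob (map_pmf butlast (traj d0 \<pi> P (Suc k))) (hits I)"
    by simp
  then show ?thesis using Suc by (simp only: map_pmf_butlast_traj_Suc) simp
qed

lemma reward_gap_bounds:
  fixes xs :: "('s \<times> 'a) list" and I :: "('s \<times> 'a) set" and r :: "'s \<Rightarrow> 'a \<Rightarrow> real" and Rt :: real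
  assumes "xs \<noteq> []" and r_range: "\<And>s a. 0 \<le> r s a \<and> r s a \<le> 1" and "Rt \<le> 0"
  defines "gap \<equiv> r (fst (last xs)) (snd (last xs)) - stopped_reward I Rt r (stop_at I xs, length xs)"
    and "first_hit \<equiv> indicator (hits I) xs - indicator (butlast -` hits I) xs"
  shows "\<bar>Rt\<bar> * first_hit \<le> gap \<and> gap \<le> indicator (hits I) xs + \<bar>Rt\<bar> * first_hit"
proof -
  have "xs \<in> hits I \<longleftrightarrow> butlast xs \<in> hits I \<or> last xs \<in> I"
    using assms(1) by (cases xs rule: rev_cases) (auto simp: hits_def)
  then show ?thesis
    using stopped_reward_stop_at[OF assms(1), of I Rt r] r_range[of "fst (last xs)" "snd (last xs)"] assms(3)
    unfolding gap_def first_hit_def by (auto simp: indicator_def)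
qed

lemma expected_reward_gap_bounds:
  fixes d0 :: "'s pmf" and \<pi> :: "'s \<Rightarrow> 'a pmf" and P :: "'s \<Rightarrow> 'a \<Rightarrow> 's pmf" and h :: nat
    and I :: "('s \<times> 'a) set" and r :: "'s \<Rightarrow> 'a \<Rightarrow> real" and Rt :: real
  assumes r_range: "\<And>s a. 0 \<le> r s a \<and> r s a \<le> 1" and Rt: "Rt \<le> 0"
  defines "p \<equiv> measure_pmf.prob (traj d0 \<pi> P h) (hits I)"
    and "p_before \<equiv> measure_pmf.prob (traj d0 \<pi> P h) (butlast -` hits I)"
    and "gap \<equiv> measure_pmf.expectation (traj d0 \<pi> P h) (\<lambda>xs. r (fst (last xs)) (snd (last xs)))
      - measure_pmf.expectation (traj d0 \<pi> P h) (\<lambda>xs. stopped_reward I Rt r (stop_at I xs, length xs))"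
  shows "\<bar>Rt\<bar> * (p - p_before) \<le> gap \<and> gap \<le> p + \<bar>Rt\<bar> * (p - p_before)"
proof -
  let ?T = "traj d0 \<pi> P h"
  let ?gap = "\<lambda>xs. r (fst (last xs)) (snd (last xs)) - stopped_reward I Rt r (stop_at I xs, length xs)"
  let ?first = "\<lambda>xs. indicator (hits I) xs - indicator (butlast -` hits I) xs :: real"
  have ind: "integrable (measure_pmf ?T) (indicator A :: _ \<Rightarrow> real)" for A
    by (intro measure_pmf.integrable_const_bound[where B = 1]) auto
  have "integrable (measure_pmf ?T) (\<lambda>xs. r (fst (last xs)) (snd (last xs)))"
    using r_range by (intro measure_pmf.integrable_const_bound[where B = 1]) auto
  moreover have "integrable (measure_pmf ?T) (\<lambda>xs. stopped_reward I Rt r (stop_at I xs, length xs))"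
    using abs_stopped_reward_le[of r, OF r_range]
    by (intro measure_pmf.integrable_const_bound[where B = "1 + \<bar>Rt\<bar>"]) auto
  ultimately have int_gap: "integrable (measure_pmf ?T) ?gap"
    and gap_eq: "gap = measure_pmf.expectation ?T ?gap"
    unfolding gap_def by (auto simp: Bochner_Integration.integral_diff)
  have pointwise: "AE xs in measure_pmf ?T. \<bar>Rt\<bar> * ?first xs \<le> ?gap xs \<and>
      ?gap xs \<le> indicator (hits I) xs + \<bar>Rt\<bar> * ?first xs"
    by (intro AE_pmfI reward_gap_bounds[OF traj_nonempty r_range Rt])
  have "measure_pmf.expectation ?T (\<lambda>xs. \<bar>Rt\<bar> * ?first xs) \<le> gap"
    unfolding gap_eq using pointwise
    by (intro integral_mono_AE integrable_mult_right Bochner_Integration.integrable_diff ind int_gap)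
      (auto elim: AE_mp)
  moreover have "gap \<le> measure_pmf.expectation ?T (\<lambda>xs. indicator (hits I) xs + \<bar>Rt\<bar> * ?first xs)"
    unfolding gap_eq using pointwise
    by (intro integral_mono_AE integrable_mult_right Bochner_Integration.integrable_diff
        Bochner_Integration.integrable_add ind int_gap)
      (auto elim: AE_mp)
  moreover have "measure_pmf.expectation ?T ?first = p - p_before"
    unfolding p_def p_before_def using ind by (simp add: Bochner_Integration.integral_diff)
  ultimately show ?thesis
    unfolding p_def using ind by (simp add: Bochner_Integration.integral_add)
qed

lemma value_fn_absorbing_gap_bounds:
  fixes Rt :: real
  assumes r_range: "\<And>s a. 0 \<le> r s a \<and> r s a \<le> 1" and gamma: "0 \<le> \<gamma>" "\<gamma> < 1" and Rt: "Rt \<le> 0"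
    and ext: "\<And>s. \<pi>t (Some s) = \<pi> s"
  shows "\<bar>Rt\<bar> * interv_prob d0 \<pi> P \<gamma> I
           \<le> value_fn d0 \<pi> P r \<gamma> - value_fn (map_pmf Some d0) \<pi>t (abs_P I P) (abs_r I Rt r) \<gamma>
       \<and> value_fn d0 \<pi> P r \<gamma> - value_fn (map_pmf Some d0) \<pi>t (abs_P I P) (abs_r I Rt r) \<gamma>
           \<le> (\<bar>Rt\<bar> + 1 / (1 - \<gamma>)) * interv_prob d0 \<pi> P \<gamma> I"
proof -
  define p where "p h = measure_pmf.prob (traj d0 \<pi> P h) (hits I)" for h
  define q where "q h = p h - (case h of 0 \<Rightarrow> 0 | Suc k \<Rightarrow> p k)" for h
  define e where "e h = measure_pmf.expectation (traj d0 \<pi> P h) (\<lambda>xs. r (fst (last xs)) (snd (last xs)))" for h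
  define g where "g h = measure_pmf.expectation (traj d0 \<pi> P h)
      (\<lambda>xs. stopped_reward I Rt r (stop_at I xs, length xs))" for h
  let ?Q = "interv_prob d0 \<pi> P \<gamma> I"
  let ?V = "value_fn d0 \<pi> P r \<gamma>"
  let ?Vt = "value_fn (map_pmf Some d0) \<pi>t (abs_P I P) (abs_r I Rt r) \<gamma>"
  have p_bound: "\<bar>p h\<bar> \<le> 1" for h
    unfolding p_def by simp
  have "\<bar>q h\<bar> \<le> 2" for h
    using p_bound[of h] p_bound[of "h - 1"] by (cases h) (auto simp: q_def)
  then have "(\<lambda>h. \<gamma> ^ h * q h) sums (\<Sum>h. \<gamma> ^ h * q h)"
    by (intro summable_sums summable_discounted_bounded[OF gamma])
  also have "(\<Sum>h. \<gamma> ^ h * q h) = ?Q"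
    unfolding q_def suminf_discounted_increments[OF gamma p_bound]
    by (simp add: interv_prob_def p_def hits_def)
  finally have q_sums: "(\<lambda>h. \<gamma> ^ h * q h) sums ?Q" .
  have "(\<lambda>h. \<gamma> ^ h * p h) sums (\<Sum>h. \<gamma> ^ h * p h)"
    by (intro summable_sums summable_discounted_bounded[OF gamma p_bound])
  moreover have "(\<Sum>h. \<gamma> ^ h * p h) = ?Q / (1 - \<gamma>)"
    using gamma by (simp add: interv_prob_def p_def hits_def)
  ultimately have p_sums: "(\<lambda>h. \<gamma> ^ h * p h) sums (?Q / (1 - \<gamma>))"
    by simp
  have "(\<lambda>h. \<gamma> ^ h * e h) sums ?V"
    unfolding value_fn_def e_def using r_range
    by (intro summable_sums summable_discounted_bounded[OF gamma, where B = 1] abs_expectation_le)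
      (auto simp: abs_le_iff)
  moreover have "(\<lambda>h. \<gamma> ^ h * g h) sums ?Vt"
    unfolding value_fn_def g_def expectation_abs_r_eq_stopped_reward[of \<pi>t \<pi>, OF ext]
    by (intro summable_sums summable_discounted_bounded[OF gamma, where B = "1 + \<bar>Rt\<bar>"]
        abs_expectation_le abs_stopped_reward_le r_range)
  ultimately have gap_sums: "(\<lambda>h. \<gamma> ^ h * (e h - g h)) sums (?V - ?Vt)"
    by (simp add: sums_diff right_diff_distrib)
  have gap: "\<bar>Rt\<bar> * q h \<le> e h - g h \<and> e h - g h \<le> p h + \<bar>Rt\<bar> * q h" for h
    using expected_reward_gap_bounds[OF r_range Rt, of d0 \<pi> P h I]
    unfolding p_def q_def e_def g_def prob_butlast_hits_traj .
  have "\<bar>Rt\<bar> * ?Q \<le> ?V - ?Vt"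
    using gap gamma
    by (intro sums_le[OF _ sums_mult[OF q_sums] gap_sums])
      (auto simp: mult.left_commute[of "\<bar>Rt\<bar>"] intro!: mult_left_mono)
  moreover have "?V - ?Vt \<le> ?Q / (1 - \<gamma>) + \<bar>Rt\<bar> * ?Q"
    using gap gamma
    by (intro sums_le[OF _ gap_sums sums_add[OF p_sums sums_mult[OF q_sums]]])
      (auto simp: distrib_left[symmetric] mult.left_commute[of "\<bar>Rt\<bar>"] intro!: mult_left_mono)
  ultimately show ?thesis
    by (simp add: algebra_simps)
qed

theorem mainTheorem8:
  fixes d0 :: "'s pmf" and P :: "'s \<Rightarrow> 'a \<Rightarrow> 's pmf" and r :: "'s \<Rightarrow> 'a \<Rightarrow> real"
    and \<gamma> :: real and s_tri s_circ :: 's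
    and Qb :: "'s \<Rightarrow> 'a \<Rightarrow> real" and \<mu> :: "'s \<Rightarrow> 'a pmf" and \<eta> :: real and Rt :: real
    and \<pi> :: "'s \<Rightarrow> 'a pmf" and \<pi>t :: "'s option \<Rightarrow> 'a pmf"
  assumes r_range: "\<And>s a. 0 \<le> r s a \<and> r s a \<le> 1"
    and gamma: "0 \<le> \<gamma>" "\<gamma> < 1"
    and eta: "0 \<le> \<eta>" "\<eta> \<le> 1"
    and Qb_range: "\<And>s a. s \<noteq> s_tri \<Longrightarrow> s \<noteq> s_circ \<Longrightarrow> 0 \<le> Qb s a \<and> Qb s a \<le> 1"
    and Rt: "Rt \<le> 0"
    and ext: "\<And>s. \<pi>t (Some s) = \<pi> s"
  defines "I \<equiv> interv_set s_tri s_circ Qb \<mu> \<eta>"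
  shows "\<bar>Rt\<bar> * interv_prob d0 \<pi> P \<gamma> I
           \<le> value_fn d0 \<pi> P r \<gamma> - value_fn (map_pmf Some d0) \<pi>t (abs_P I P) (abs_r I Rt r) \<gamma>
       \<and> value_fn d0 \<pi> P r \<gamma> - value_fn (map_pmf Some d0) \<pi>t (abs_P I P) (abs_r I Rt r) \<gamma>
           \<le> (\<bar>Rt\<bar> + 1 / (1 - \<gamma>)) * interv_prob d0 \<pi> P \<gamma> I"
  \<comment> \<open>The bounds hold for every intervention set.\<close>
  using value_fn_absorbing_gap_bounds[of r \<gamma> Rt \<pi>t \<pi>, OF r_range gamma Rt ext] .

end
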